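(* Let $\mathcal{X}=G^{\min}/P$ be the affine Grassmannian of the minimal affine Kac–Moody group $G^{\min}=\widehat{SL_2}$, with $P$ the standard maximal parabolic, and let $c^k_{n,m}\in\mathbb{Z}[\alpha_0,\alpha_1]$ be defined by $$\hat{\varepsilon}_n\cdot\hat{\varepsilon}_m=\sum_{k=\max\{n,m\}}^{n+m}c^k_{n,m}\,\hat{\varepsilon}_k\quad\text{in } H^\bullet_T(\mathcal{X}),$$ with $c^k_{n,m}=0$ for $k<\max\{n,m\}$ or $k>n+m$. Then for integers $1\le n\le m$ and $0\le i\le n$, $$c^{m+i}_{n,m}=\frac{1}{n!}\left[\frac{(m+i)!}{m!}\,Q^{n-i}_{m,i}-\sum_{k=\max\{i,1\}}^{n-1}k!\,Q^{n-k}_{1,k-1}\,c^{m+i}_{k,m}\right].$$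
   Context: $T$ is the adjoint torus of $\widehat{SL_2}$, and $H^\bullet_T(\mathrm{pt})$ is identified with the polynomial ring $\mathbb{Z}[\alpha_0,\alpha_1]$ in the simple roots (graded with $\alpha_0,\alpha_1$ in degree $1$); $c^k_{n,m}$ is homogeneous of degree $n+m-k$. $\{\hat{\varepsilon}_i\}_{i\ge0}$ is the $T$-equivariant Schubert basis of $H^\bullet_T(\mathcal{X})$ over $\mathbb{Z}[\alpha_0,\alpha_1]$ (Kumar's basis $\hat{\varepsilon}_{w_i}$), indexed by $w_i$, the alternating word of length $i$ in $s_0,s_1$ ending in $s_0$; $\hat\varepsilon_0=1$ and it satisfies the equivariant Chevalley formula $\hat{\varepsilon}_1\cdot\hat{\varepsilon}_m=q_m\hat{\varepsilon}_m+(m+1)\hat{\varepsilon}_{m+1}$, where $q_m:=\lceil m/2\rceil^2\alpha_0+(\lfloor m/2\rfloor^2+\lfloor m/2\rfloor)\alpha_1$. For $d\ge0$, $i\ge1$, $j\ge0$, $Q^d_{i,j}$ denotes the complete homogeneous symmetric polynomial of degree $d$ in $q_i,q_{i+1},\dots,q_{i+j}$, i.e. the sum of all monomials of degree $d$ in these $j+1$ variables ($Q^0_{i,j}=1$). *)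

theory Defs
  imports "HOL-Computational_Algebra.Polynomial"
begin

text \<open>The coefficient ring H_T(pt) = Z[alpha0, alpha1], modelled as
  int poly poly: alpha1 is the outer variable, alpha0 the inner variable.\<close>

type_synonym coeffring = "int poly poly"

definition alpha0 :: coeffring where "alpha0 = [:[:0, 1:]:]"
definition alpha1 :: coeffring where "alpha1 = [:0, 1:]"

definition qq :: "nat \<Rightarrow> coeffring" where
  "qq m = of_nat (((m + 1) div 2)^2) * alpha0
         + of_nat ((m div 2)^2 + m div 2) * alpha1"

text \<open>Q^d_{i,j}: complete homogeneous symmetric polynomial of degree d in
  q_i, ..., q_{i+j}: sum over all exponent vectors f on {0..j} with total degree d.\<close>
definition QQ :: "nat \<Rightarrow> nat \<Rightarrow> nat \<Rightarrow> coeffring" where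
  "QQ d i j = (\<Sum>f \<in> {f :: nat \<Rightarrow> nat. (\<forall>t. j < t \<longrightarrow> f t = 0) \<and> (\<Sum>t\<le>j. f t) = d}.
                  \<Prod>t\<le>j. qq (i + t) ^ f t)"

end

theory Submission
  imports Defs
begin

(* Expand eps 1 ^ n * eps m in the Schubert basis in two ways. Iterating the Chevalley formula
   shows that the coefficient of eps (m + j) is (m + j)!/m! times the complete homogeneous
   polynomial of degree n - j in q_m, ..., q_(m+j). Alternatively, the same computation with m = 0
   gives eps 1 ^ n = sum_k k! Q^(n-k)_(1,k-1) eps k (the term k = 0 vanishes as q_0 = 0), and
   multiplying by eps m through the structure constants makes the coefficient of eps (m + i) equal
   to sum_k k! Q^(n-k)_(1,k-1) c^(m+i)_(k,m). Comparing coefficients and isolating the term k = n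
   gives the recursion; the terms with k < i vanish because then m + i exceeds k + m. *)

definition exponents_of_degree :: "nat \<Rightarrow> nat \<Rightarrow> (nat \<Rightarrow> nat) set" where
  "exponents_of_degree d j = {f. (\<forall>t. j < t \<longrightarrow> f t = 0) \<and> (\<Sum>t\<le>j. f t) = d}"

definition complete_homogeneous :: "nat \<Rightarrow> (nat \<Rightarrow> 'a::comm_semiring_1) \<Rightarrow> nat \<Rightarrow> 'a" where
  "complete_homogeneous d x j = (\<Sum>f\<in>exponents_of_degree d j. \<Prod>t\<le>j. x t ^ f t)"

lemma QQ_eq_complete_homogeneous: "QQ d i j = complete_homogeneous d (\<lambda>t. qq (i + t)) j"
  by (simp add: QQ_def complete_homogeneous_def exponents_of_degree_def)

lemma finite_exponents_of_degree: "finite (exponents_of_degree d j)"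
proof (rule finite_subset)
  show "exponents_of_degree d j \<subseteq>
          {f. \<forall>t. (t \<in> {..j} \<longrightarrow> f t \<in> {..d}) \<and> (t \<notin> {..j} \<longrightarrow> f t = 0)}"
  proof (clarify, intro allI conjI impI)
    fix f t assume f: "f \<in> exponents_of_degree d j"
    show "f t \<in> {..d}" if "t \<in> {..j}"
      using f that member_le_sum[of t "{..j}" f] by (auto simp: exponents_of_degree_def)
    show "f t = 0" if "t \<notin> {..j}"
      using f that by (auto simp: exponents_of_degree_def)
  qed
qed (rule finite_set_of_finite_funs; simp)

lemma exponents_of_degree_single_var: "exponents_of_degree d 0 = {(\<lambda>t. 0)(0 := d)}"
  by (auto simp: exponents_of_degree_def fun_eq_iff)

lemma complete_homogeneous_single_var: "complete_homogeneous d x 0 = x 0 ^ d"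
  by (simp add: complete_homogeneous_def exponents_of_degree_single_var)

lemma bij_betw_exponents_of_degree_Suc:
  "bij_betw (\<lambda>(e, g). g(Suc j := e))
     (SIGMA e:{..d}. exponents_of_degree (d - e) j) (exponents_of_degree d (Suc j))"
proof -
  have sum_upd: "(\<Sum>t\<le>j. (f(Suc j := e)) t) = (\<Sum>t\<le>j. f t)" for f :: "nat \<Rightarrow> nat" and e
    by (rule sum.cong) auto
  show ?thesis
    by (rule bij_betw_byWitness[where f' = "\<lambda>f. (f (Suc j), f(Suc j := 0))"])
      (use sum_upd in \<open>auto simp: exponents_of_degree_def fun_eq_iff\<close>)
qed

lemma complete_homogeneous_Suc:
  "complete_homogeneous d x (Suc j) = (\<Sum>e\<le>d. x (Suc j) ^ e * complete_homogeneous (d - e) x j)"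
proof -
  let ?h = "\<lambda>f. \<Prod>t\<le>Suc j. x t ^ f t"
  let ?\<Sigma> = "SIGMA e:{..d}. exponents_of_degree (d - e) j"
  have "complete_homogeneous d x (Suc j) = (\<Sum>p\<in>?\<Sigma>. ?h ((\<lambda>(e, g). g(Suc j := e)) p))"
    unfolding complete_homogeneous_def
    by (rule sum.reindex_bij_betw[OF bij_betw_exponents_of_degree_Suc, symmetric])
  also have "\<dots> = (\<Sum>(e, g)\<in>?\<Sigma>. x (Suc j) ^ e * (\<Prod>t\<le>j. x t ^ g t))"
    by (rule sum.cong) (auto simp: mult.commute)
  also have "\<dots> = (\<Sum>e\<le>d. \<Sum>g\<in>exponents_of_degree (d - e) j. x (Suc j) ^ e * (\<Prod>t\<le>j. x t ^ g t))"
    by (simp add: sum.Sigma finite_exponents_of_degree)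
  finally show ?thesis
    by (simp add: complete_homogeneous_def sum_distrib_left)
qed

lemma complete_homogeneous_degree_0 [simp]: "complete_homogeneous 0 x j = 1"
  by (induction j) (simp_all add: complete_homogeneous_single_var complete_homogeneous_Suc)

lemma complete_homogeneous_Suc_Suc:
  "complete_homogeneous (Suc d) x (Suc j)
     = x (Suc j) * complete_homogeneous d x (Suc j) + complete_homogeneous (Suc d) x j"
  by (simp add: complete_homogeneous_Suc sum.atMost_Suc_shift sum_distrib_left mult.assoc add.commute
      del: sum.atMost_Suc)

lemma complete_homogeneous_drop_zero_var:
  assumes "x 0 = 0"
  shows "complete_homogeneous d x (Suc j) = complete_homogeneous d (\<lambda>t. x (Suc t)) j"
proof (induction j arbitrary: d)
  case 0
  have "(\<Sum>e\<le>d. x 1 ^ e * 0 ^ (d - e)) = x 1 ^ d"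
    by (subst sum.mono_neutral_right[of "{..d}" "{d}"]) (auto simp: zero_power)
  then show ?case
    using assms by (simp add: complete_homogeneous_Suc complete_homogeneous_single_var)
next
  case (Suc j)
  have "complete_homogeneous d x (Suc (Suc j))
      = (\<Sum>e\<le>d. x (Suc (Suc j)) ^ e * complete_homogeneous (d - e) x (Suc j))"
    by (rule complete_homogeneous_Suc)
  also have "\<dots> = (\<Sum>e\<le>d. x (Suc (Suc j)) ^ e * complete_homogeneous (d - e) (\<lambda>t. x (Suc t)) j)"
    by (simp only: Suc.IH)
  also have "\<dots> = complete_homogeneous d (\<lambda>t. x (Suc t)) (Suc j)"
    by (rule complete_homogeneous_Suc[symmetric])
  finally show ?case .
qed

lemma fact_add_Suc_div_fact:
  "fact (m + Suc j) div fact m = (m + Suc j) * (fact (m + j) div (fact m :: nat))"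
proof -
  have "fact (m + Suc j) = (m + Suc j) * (fact (m + j) :: nat)"
    by simp
  then show ?thesis
    using div_mult_swap[OF fact_dvd[of m "m + j"], of "m + Suc j"] by simp
qed

fun chevalley_coeff :: "(nat \<Rightarrow> 'a::comm_semiring_1) \<Rightarrow> nat \<Rightarrow> nat \<Rightarrow> nat \<Rightarrow> 'a" where
  "chevalley_coeff q m 0 j = (if j = 0 then 1 else 0)"
| "chevalley_coeff q m (Suc n) j =
     q (m + j) * chevalley_coeff q m n j
     + (if j = 0 then 0 else of_nat (m + j) * chevalley_coeff q m n (j - 1))"

lemma chevalley_coeff_closed_form:
  "chevalley_coeff q m n j =
     (if j \<le> n then of_nat (fact (m + j) div fact m) * complete_homogeneous (n - j) (\<lambda>t. q (m + t)) j
      else 0)"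
proof (induction n arbitrary: j)
  case 0
  then show ?case by (simp add: complete_homogeneous_single_var)
next
  case (Suc n)
  let ?h = "\<lambda>d j. complete_homogeneous d (\<lambda>t. q (m + t)) j"
  let ?P = "\<lambda>j. of_nat (fact (m + j) div fact m) :: 'a"
  show ?case
  proof (cases j)
    case 0
    then show ?thesis using Suc.IH by (simp add: complete_homogeneous_single_var)
  next
    case (Suc j')
    have P_Suc: "?P j = of_nat (m + j) * ?P j'"
      using Suc by (simp only: fact_add_Suc_div_fact of_nat_mult)
    consider "j \<le> n" | "j = Suc n" | "Suc n < j" by linarith
    then show ?thesis
    proof cases
      case 1
      then have "n - j' = Suc (n - j)" using Suc by simp
      with 1 Suc Suc.IH have "chevalley_coeff q m (Suc n) j
          = q (m + j) * (?P j * ?h (n - j) j) + of_nat (m + j) * (?P j' * ?h (Suc (n - j)) j')"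
        by simp
      also have "\<dots> = ?P j * (q (m + j) * ?h (n - j) j + ?h (Suc (n - j)) j')"
        by (simp only: P_Suc) (simp add: algebra_simps)
      also have "\<dots> = ?P j * ?h (Suc n - j) j"
        using 1 Suc by (simp only: Suc_diff_le complete_homogeneous_Suc_Suc)
      finally show ?thesis using 1 by simp
    next
      case 2
      then show ?thesis using Suc Suc.IH P_Suc by simp
    next
      case 3
      then show ?thesis using Suc Suc.IH by simp
    qed
  qed
qed

lemma chevalley_coeff_eq_0: "n < j \<Longrightarrow> chevalley_coeff q m n j = 0"
  by (simp add: chevalley_coeff_closed_form)

lemma chevalley_coeff_0_closed_form:
  assumes "q 0 = 0" and "1 \<le> n"
  shows "chevalley_coeff q 0 n k =
           (if 1 \<le> k \<and> k \<le> n
            then of_nat (fact k) * complete_homogeneous (n - k) (\<lambda>t. q (Suc t)) (k - 1) else 0)"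
proof (cases k)
  case 0
  then show ?thesis
    using assms by (simp add: chevalley_coeff_closed_form complete_homogeneous_single_var power_0_left)
next
  case (Suc k')
  then show ?thesis
    using assms by (simp add: chevalley_coeff_closed_form complete_homogeneous_drop_zero_var)
qed

locale chevalley_basis =
  fixes \<iota> :: "'r::comm_ring_1 \<Rightarrow> 'h::comm_ring_1"
    and eps :: "nat \<Rightarrow> 'h"
    and q :: "nat \<Rightarrow> 'r"
  assumes hom_one: "\<iota> 1 = 1"
    and hom_add: "\<iota> (a + b) = \<iota> a + \<iota> b"
    and hom_mult: "\<iota> (a * b) = \<iota> a * \<iota> b"
    and chevalley: "eps 1 * eps m = \<iota> (q m) * eps m + of_nat (m + 1) * eps (m + 1)"
begin

lemma hom_zero: "\<iota> 0 = 0"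
  using hom_add[of 0 0] by simp

lemma hom_diff: "\<iota> (a - b) = \<iota> a - \<iota> b"
  using hom_add[of "a - b" b] by (simp add: algebra_simps)

lemma hom_sum: "\<iota> (\<Sum>k\<in>A. f k) = (\<Sum>k\<in>A. \<iota> (f k))"
  by (induction A rule: infinite_finite_induct) (simp_all add: hom_zero hom_add)

lemma hom_of_nat: "\<iota> (of_nat k) = of_nat k"
  by (induction k) (simp_all add: hom_zero hom_one hom_add)

lemma power_eps1_mult: "eps 1 ^ n * eps m = (\<Sum>j\<le>n. \<iota> (chevalley_coeff q m n j) * eps (m + j))"
proof (induction n)
  case 0
  then show ?case by (simp add: hom_one)
next
  case (Suc n)
  let ?C = "chevalley_coeff q m n"
  have "eps 1 ^ Suc n * eps m = (\<Sum>j\<le>n. \<iota> (?C j) * (eps 1 * eps (m + j)))"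
    by (simp only: power_Suc mult.assoc Suc.IH sum_distrib_left mult.left_commute)
  also have "\<dots> = (\<Sum>j\<le>n. \<iota> (q (m + j) * ?C j) * eps (m + j)
                            + \<iota> (of_nat (m + Suc j) * ?C j) * eps (m + Suc j))"
    by (rule sum.cong[OF refl], simp only: chevalley hom_mult hom_of_nat) (simp add: distrib_left ac_simps)
  also have "\<dots> = (\<Sum>j\<le>n. \<iota> (q (m + j) * ?C j) * eps (m + j))
                 + (\<Sum>j\<le>n. \<iota> (of_nat (m + Suc j) * ?C j) * eps (m + Suc j))"
    by (rule sum.distrib)
  also have "\<dots> = (\<Sum>j\<le>Suc n. \<iota> (q (m + j) * ?C j) * eps (m + j))
                 + (\<Sum>j\<le>Suc n. \<iota> (if j = 0 then 0 else of_nat (m + j) * ?C (j - 1)) * eps (m + j))"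
  proof -
    have "(\<Sum>j\<le>n. \<iota> (q (m + j) * ?C j) * eps (m + j))
        = (\<Sum>j\<le>Suc n. \<iota> (q (m + j) * ?C j) * eps (m + j))"
      by (simp add: chevalley_coeff_eq_0 hom_zero)
    moreover have "(\<Sum>j\<le>n. \<iota> (of_nat (m + Suc j) * ?C j) * eps (m + Suc j))
        = (\<Sum>j\<le>Suc n. \<iota> (if j = 0 then 0 else of_nat (m + j) * ?C (j - 1)) * eps (m + j))"
      by (subst sum.atMost_Suc_shift) (simp add: hom_zero)
    ultimately show ?thesis by (simp only:)
  qed
  also have "\<dots> = (\<Sum>j\<le>Suc n. \<iota> (chevalley_coeff q m (Suc n) j) * eps (m + j))"
    by (simp only: sum.distrib[symmetric]) (simp add: hom_add distrib_right del: sum.atMost_Suc)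
  finally show ?case .
qed

end

locale schubert_basis = chevalley_basis +
  fixes c :: "nat \<Rightarrow> nat \<Rightarrow> nat \<Rightarrow> 'r::comm_ring_1"
  assumes eps0: "eps 0 = 1"
    and indep: "(\<Sum>k\<le>N. \<iota> (a k) * eps k) = 0 \<Longrightarrow> \<forall>k\<le>N. a k = 0"
    and structure_consts: "eps n * eps m = (\<Sum>k = max n m..n + m. \<iota> (c k n m) * eps k)"
    and c_zero: "k < max n m \<or> n + m < k \<Longrightarrow> c k n m = 0"
begin

lemma expansion_unique:
  assumes "(\<Sum>k\<le>N. \<iota> (a k) * eps k) = (\<Sum>k\<le>N. \<iota> (b k) * eps k)" and "k \<le> N"
  shows "a k = b k"
proof -
  have "(\<Sum>k\<le>N. \<iota> (a k - b k) * eps k) = 0"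
    using assms(1) by (simp add: hom_diff left_diff_distrib sum_subtractf)
  then show ?thesis using indep assms(2) by fastforce
qed

lemma eps_mult_expansion:
  assumes "n + m \<le> N"
  shows "eps n * eps m = (\<Sum>l\<le>N. \<iota> (c l n m) * eps l)"
  unfolding structure_consts
  by (rule sum.mono_neutral_left) (use assms in \<open>auto simp: c_zero hom_zero\<close>)

lemma chevalley_coeff_eq_structure_sum:
  assumes "i \<le> n"
  shows "chevalley_coeff q m n i = (\<Sum>k\<le>n. chevalley_coeff q 0 n k * c (m + i) k m)"
proof -
  define A where "A l = (if m \<le> l then chevalley_coeff q m n (l - m) else 0)" for l
  define B where "B l = (\<Sum>k\<le>n. chevalley_coeff q 0 n k * c l k m)" for l
  have "(\<Sum>l\<le>n + m. \<iota> (A l) * eps l) = (\<Sum>l\<in>{0 + m..n + m}. \<iota> (A l) * eps l)"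
    by (rule sum.mono_neutral_right) (auto simp: A_def hom_zero)
  also have "\<dots> = (\<Sum>j\<le>n. \<iota> (chevalley_coeff q m n j) * eps (m + j))"
    by (simp only: sum.shift_bounds_cl_nat_ivl) (simp add: A_def atLeast0AtMost add.commute)
  also have "\<dots> = eps 1 ^ n * eps m"
    by (rule power_eps1_mult[symmetric])
  also have "\<dots> = (\<Sum>k\<le>n. \<iota> (chevalley_coeff q 0 n k) * (eps k * eps m))"
    using power_eps1_mult[of n 0] by (simp add: eps0 sum_distrib_right mult.assoc)
  also have "\<dots> = (\<Sum>k\<le>n. \<Sum>l\<le>n + m. \<iota> (chevalley_coeff q 0 n k) * (\<iota> (c l k m) * eps l))"
    by (rule sum.cong[OF refl]) (simp add: eps_mult_expansion[of _ m "n + m"] sum_distrib_left)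
  also have "\<dots> = (\<Sum>l\<le>n + m. \<iota> (B l) * eps l)"
    by (subst sum.swap) (simp add: B_def hom_sum hom_mult sum_distrib_right mult.assoc)
  finally have "A (m + i) = B (m + i)"
    by (rule expansion_unique) (use assms in simp)
  then show ?thesis by (simp add: A_def B_def)
qed

end

theorem proposition6p2:
  fixes \<iota> :: "coeffring \<Rightarrow> 'h :: comm_ring_1"
    and eps :: "nat \<Rightarrow> 'h"
    and c :: "nat \<Rightarrow> nat \<Rightarrow> nat \<Rightarrow> coeffring"
  assumes hom_one: "\<iota> 1 = 1"
    and hom_add: "\<And>a b. \<iota> (a + b) = \<iota> a + \<iota> b"
    and hom_mult: "\<And>a b. \<iota> (a * b) = \<iota> a * \<iota> b"
    and indep: "\<And>(a :: nat \<Rightarrow> coeffring) N. (\<Sum>k\<le>N. \<iota> (a k) * eps k) = 0 \<Longrightarrow> \<forall>k\<le>N. a k = 0"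
    and span: "\<And>x. \<exists>(a :: nat \<Rightarrow> coeffring) N. x = (\<Sum>k\<le>N. \<iota> (a k) * eps k)"
    and eps0: "eps 0 = 1"
    and chevalley: "\<And>m. eps 1 * eps m = \<iota> (qq m) * eps m + of_nat (m + 1) * eps (m + 1)"
    and structure_consts: "\<And>n m. eps n * eps m = (\<Sum>k = max n m..n + m. \<iota> (c k n m) * eps k)"
    and c_zero: "\<And>k n m. k < max n m \<or> n + m < k \<Longrightarrow> c k n m = 0"
    and nm: "1 \<le> n" "n \<le> m"
    and i_le: "i \<le> n"
  shows "of_nat (fact n) * c (m + i) n m =
           of_nat (fact (m + i) div fact m) * QQ (n - i) m i
           - (\<Sum>k = max i 1..n - 1. of_nat (fact k) * QQ (n - k) 1 (k - 1) * c (m + i) k m)"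
proof -
  interpret schubert_basis \<iota> eps qq c
    by unfold_locales (use assms in auto)
  define g where "g k = of_nat (fact k) * QQ (n - k) 1 (k - 1) * c (m + i) k m" for k
  have qq_0: "qq 0 = 0"
    by (simp add: qq_def)
  have "of_nat (fact (m + i) div fact m) * QQ (n - i) m i
      = (\<Sum>k\<le>n. chevalley_coeff qq 0 n k * c (m + i) k m)"
    using i_le chevalley_coeff_eq_structure_sum[OF i_le, of m]
    by (simp add: chevalley_coeff_closed_form QQ_eq_complete_homogeneous)
  also have "\<dots> = (\<Sum>k = 1..n. g k)"
    by (rule sum.mono_neutral_cong_right)
      (auto simp: chevalley_coeff_0_closed_form[of qq, OF qq_0 nm(1)] g_def QQ_eq_complete_homogeneous)
  also have "\<dots> = (\<Sum>k = 1..n - 1. g k) + g n"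
    using nm(1) sum.cl_ivl_Suc[of g 1 "n - 1"] by simp
  also have "(\<Sum>k = 1..n - 1. g k) = (\<Sum>k = max i 1..n - 1. g k)"
    by (rule sum.mono_neutral_right) (auto simp: g_def c_zero)
  also have "g n = of_nat (fact n) * c (m + i) n m"
    by (simp add: g_def QQ_eq_complete_homogeneous)
  finally show ?thesis
    by (simp add: g_def)
qed

end
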